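(* Let $\Omega\subset\mathbb R^d$ be a bounded Borel set, $f:\Omega\to[0,\infty)$ with $\int_\Omega f=1$, $p\ge1$, $x_1,\dots,x_k\in\Omega$, and $h_1,\dots,h_k:[0,1]\to[0,\infty)$ strictly increasing. Let $(A_i)_{i=1}^k$ be an equilibrium and let $(B_i)_{i=1}^k$ be a partition of $\Omega$ with $C(x,(B_i)_i)\le C(x,(A_i)_i)$ for $f$-a.e. $x\in\Omega$. Then $A_i=B_i$ up to $f$-negligible sets for every $i$.
   Context: A partition of $\Omega$ is a family of Borel sets pairwise disjoint up to $f$-negligible sets whose union has full $f\,dx$-measure. For a partition $(B_i)_{i=1}^k$, $C(x,(B_i)_i)=\sum_{i=1}^k[|x-x_i|^p+h_i(\int_{B_i}f\,dx)]\mathbf 1_{B_i}(x)$. A partition $(A_i)$ is an equilibrium if, with $c_j=\int_{A_j}f$, for every $i$: $A_i=\{x:|x-x_i|^p+h_i(c_i)<|x-x_j|^p+h_j(c_j)\ \forall j\ne i\}$ up to $f$-negligible sets. *)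

theory Defs
  imports "HOL-Analysis.Analysis"
begin

text \<open>The measure f dx restricted to Omega (f is only given on Omega).\<close>
definition fmeasure :: "'a::euclidean_space set \<Rightarrow> ('a \<Rightarrow> real) \<Rightarrow> 'a measure" where
  "fmeasure \<Omega> f = density lebesgue (\<lambda>x. ennreal (indicator \<Omega> x * f x))"

definition f_negligible :: "'a::euclidean_space set \<Rightarrow> ('a \<Rightarrow> real) \<Rightarrow> 'a set \<Rightarrow> bool" where
  "f_negligible \<Omega> f N \<longleftrightarrow> N \<in> null_sets (fmeasure \<Omega> f)"

definition f_ae_eq :: "'a::euclidean_space set \<Rightarrow> ('a \<Rightarrow> real) \<Rightarrow> 'a set \<Rightarrow> 'a set \<Rightarrow> bool" where
  "f_ae_eq \<Omega> f A B \<longleftrightarrow> f_negligible \<Omega> f ((A - B) \<union> (B - A))"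

definition is_partition ::
  "'a::euclidean_space set \<Rightarrow> ('a \<Rightarrow> real) \<Rightarrow> nat \<Rightarrow> (nat \<Rightarrow> 'a set) \<Rightarrow> bool" where
  "is_partition \<Omega> f k B \<longleftrightarrow>
     (\<forall>i<k. B i \<in> sets borel) \<and>
     (\<forall>i<k. \<forall>j<k. i \<noteq> j \<longrightarrow> f_negligible \<Omega> f (B i \<inter> B j)) \<and>
     f_negligible \<Omega> f (\<Omega> - (\<Union>i<k. B i))"

definition mass :: "'a::euclidean_space set \<Rightarrow> ('a \<Rightarrow> real) \<Rightarrow> 'a set \<Rightarrow> real" where
  "mass \<Omega> f S = set_lebesgue_integral lebesgue (S \<inter> \<Omega>) f"

definition cost ::
  "'a::euclidean_space set \<Rightarrow> ('a \<Rightarrow> real) \<Rightarrow> real \<Rightarrow> nat \<Rightarrow> (nat \<Rightarrow> 'a) \<Rightarrow> (nat \<Rightarrow> real \<Rightarrow> real)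
    \<Rightarrow> (nat \<Rightarrow> 'a set) \<Rightarrow> 'a \<Rightarrow> real" where
  "cost \<Omega> f p k xs h B x =
     (\<Sum>i<k. (norm (x - xs i) powr p + h i (mass \<Omega> f (B i))) * indicator (B i) x)"

definition is_equilibrium ::
  "'a::euclidean_space set \<Rightarrow> ('a \<Rightarrow> real) \<Rightarrow> real \<Rightarrow> nat \<Rightarrow> (nat \<Rightarrow> 'a) \<Rightarrow> (nat \<Rightarrow> real \<Rightarrow> real)
    \<Rightarrow> (nat \<Rightarrow> 'a set) \<Rightarrow> bool" where
  "is_equilibrium \<Omega> f p k xs h A \<longleftrightarrow>
     is_partition \<Omega> f k A \<and>
     (\<forall>i<k. f_ae_eq \<Omega> f (A i)
        {x. \<forall>j<k. j \<noteq> i \<longrightarrow>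
            norm (x - xs i) powr p + h i (mass \<Omega> f (A i))
              < norm (x - xs j) powr p + h j (mass \<Omega> f (A j))})"

end

theory Submission
  imports Defs "HOL-Probability.Probability_Measure"
begin

text \<open>
  Write \<open>a\<^sub>i\<close>, \<open>b\<^sub>i\<close> for the masses of \<open>A\<^sub>i\<close>, \<open>B\<^sub>i\<close>. At almost every \<open>x \<in> B\<^sub>i \<inter> A\<^sub>j\<close> the
  cost comparison and the equilibrium property give
  \<open>|x - x\<^sub>i|\<^sup>p + h\<^sub>i(b\<^sub>i) \<le> |x - x\<^sub>j|\<^sup>p + h\<^sub>j(a\<^sub>j) \<le> |x - x\<^sub>i|\<^sup>p + h\<^sub>i(a\<^sub>i)\<close>, the second inequality
  being strict for \<open>i \<noteq> j\<close>. As \<open>h\<^sub>i\<close> is strictly increasing, \<open>b\<^sub>i \<le> a\<^sub>i\<close> for every \<open>i\<close>;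
  both families of masses sum to 1, so \<open>b\<^sub>i = a\<^sub>i\<close>, and then the strict inequality
  forces every \<open>B\<^sub>i \<inter> A\<^sub>j\<close> with \<open>i \<noteq> j\<close> to be negligible.
\<close>

lemma AE_imp_ex_in_non_null:
  assumes "AE x in M. P x" "S \<in> sets M" "S \<notin> null_sets M"
  shows "\<exists>x\<in>S. P x"
proof (rule ccontr)
  assume "\<not> (\<exists>x\<in>S. P x)"
  then have "AE x in M. x \<notin> S"
    using assms(1) by (auto elim: eventually_mono)
  with assms(2,3) show False
    using AE_iff_null_sets by blast
qed

lemma sum_indicator_unique:
  assumes "\<exists>!l. l < k \<and> x \<in> C l" "i < (k::nat)" "x \<in> C i"
  shows "(\<Sum>l<k. c l * indicator (C l) x) = (c i :: real)"
proof -
  have "(\<Sum>l<k. c l * indicator (C l) x) = (\<Sum>l<k. if l = i then c i else 0)"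
    using assms by (intro sum.cong) (auto simp: indicator_def)
  also have "\<dots> = c i"
    using assms(2) by (simp add: sum.delta)
  finally show ?thesis .
qed

lemma (in prob_space) sum_prob_AE_partition:
  assumes "\<And>i. i < (k::nat) \<Longrightarrow> C i \<in> events" and "AE x in M. \<exists>!i. i < k \<and> x \<in> C i"
  shows "(\<Sum>i<k. prob (C i)) = 1"
proof -
  have "(\<Sum>i<k. prob (C i)) = (\<Sum>i<k. expectation (indicator (C i)))"
    using assms(1) by simp
  also have "\<dots> = expectation (\<lambda>x. \<Sum>i<k. indicator (C i) x)"
    using assms(1) by (intro Bochner_Integration.integral_sum[symmetric] integrable_real_indicator)
      (auto simp: less_top[symmetric])
  also have "\<dots> = expectation (\<lambda>x. 1)"
  proof (rule integral_cong_AE)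
    show "AE x in M. (\<Sum>i<k. indicator (C i) x) = (1::real)"
      using assms(2)
    proof eventually_elim
      case (elim x)
      then obtain i where "i < k" "x \<in> C i"
        by blast
      then show ?case
        using sum_indicator_unique[OF elim, of i "\<lambda>_. 1"] by simp
    qed
  qed (use assms(1) in auto)
  finally show ?thesis
    by (simp add: prob_space)
qed

lemma sets_fmeasure [simp]: "sets (fmeasure \<Omega> f) = sets lebesgue"
  by (simp add: fmeasure_def)

lemma space_fmeasure [simp]: "space (fmeasure \<Omega> f) = UNIV"
  by (simp add: fmeasure_def)

lemma AE_not_in_f_negligible: "f_negligible \<Omega> f N \<Longrightarrow> AE x in fmeasure \<Omega> f. x \<notin> N"
  unfolding f_negligible_def by (rule AE_not_in)

lemma mass_nonneg: "(\<And>x. x \<in> \<Omega> \<Longrightarrow> 0 \<le> f x) \<Longrightarrow> 0 \<le> mass \<Omega> f S"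
  unfolding mass_def set_lebesgue_integral_def
  by (intro Bochner_Integration.integral_nonneg) (simp add: indicator_def)

lemma cost_on_cell:
  assumes "\<exists>!l. l < k \<and> x \<in> C l" "i < k" "x \<in> C i"
  shows "cost \<Omega> f p k xs h C x = norm (x - xs i) powr p + h i (mass \<Omega> f (C i))"
  unfolding cost_def using assms by (rule sum_indicator_unique)

locale prob_density =
  fixes \<Omega> :: "'a::euclidean_space set" and f :: "'a \<Rightarrow> real"
  assumes domain_borel: "\<Omega> \<in> sets borel"
    and f_nonneg: "\<And>x. x \<in> \<Omega> \<Longrightarrow> 0 \<le> f x"
    and f_integrable: "set_integrable lebesgue \<Omega> f"
    and f_total_mass: "set_lebesgue_integral lebesgue \<Omega> f = 1"
begin

lemma emeasure_fmeasure:
  assumes S: "S \<in> sets lebesgue"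
  shows "emeasure (fmeasure \<Omega> f) S = ennreal (mass \<Omega> f S)"
proof -
  have "(\<lambda>x. indicator \<Omega> x *\<^sub>R f x) \<in> borel_measurable lebesgue"
    using f_integrable unfolding set_integrable_def by (rule borel_measurable_integrable)
  then have meas: "(\<lambda>x. ennreal (indicator \<Omega> x * f x)) \<in> borel_measurable lebesgue"
    by simp
  have "set_integrable lebesgue (S \<inter> \<Omega>) f"
    using S domain_borel by (intro set_integrable_subset[OF f_integrable]) auto
  then have int: "integrable lebesgue (\<lambda>x. indicator (S \<inter> \<Omega>) x * f x)"
    unfolding set_integrable_def by simp
  have "emeasure (fmeasure \<Omega> f) S
      = (\<integral>\<^sup>+ x. ennreal (indicator \<Omega> x * f x) * indicator S x \<partial>lebesgue)"
    unfolding fmeasure_def by (rule emeasure_density[OF meas S])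
  also have "\<dots> = (\<integral>\<^sup>+ x. ennreal (indicator (S \<inter> \<Omega>) x * f x) \<partial>lebesgue)"
    by (rule nn_integral_cong) (auto simp: indicator_def)
  also have "\<dots> = ennreal (mass \<Omega> f S)"
    unfolding mass_def set_lebesgue_integral_def
    using nn_integral_eq_integral[OF int] f_nonneg by (simp add: indicator_def)
  finally show ?thesis .
qed

sublocale prob_space "fmeasure \<Omega> f"
proof
  have "mass \<Omega> f UNIV = 1"
    using f_total_mass unfolding mass_def by simp
  then show "emeasure (fmeasure \<Omega> f) (space (fmeasure \<Omega> f)) = 1"
    by (simp add: emeasure_fmeasure)
qed

lemma measure_fmeasure: "S \<in> sets lebesgue \<Longrightarrow> measure (fmeasure \<Omega> f) S = mass \<Omega> f S"
  by (simp add: measure_def emeasure_fmeasure mass_nonneg[OF f_nonneg])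

lemma mass_le_1: "S \<in> sets lebesgue \<Longrightarrow> mass \<Omega> f S \<le> 1"
  using prob_le_1[of S] by (simp add: measure_fmeasure)

lemma AE_in_domain: "AE x in fmeasure \<Omega> f. x \<in> \<Omega>"
proof -
  have "mass \<Omega> f (- \<Omega>) = 0"
    unfolding mass_def set_lebesgue_integral_def by simp
  then have "- \<Omega> \<in> null_sets (fmeasure \<Omega> f)"
    using domain_borel by (simp add: null_sets_def emeasure_fmeasure)
  from AE_not_in[OF this] show ?thesis
    by simp
qed

lemma AE_unique_cell:
  assumes "is_partition \<Omega> f k C"
  shows "AE x in fmeasure \<Omega> f. \<exists>!i. i < k \<and> x \<in> C i"
proof -
  have "AE x in fmeasure \<Omega> f. \<forall>i\<in>{..<k}. \<forall>j\<in>{..<k}. i \<noteq> j \<longrightarrow> x \<notin> C i \<inter> C j"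
  proof (intro eventually_ball_finite ballI finite_lessThan)
    fix i j assume "i \<in> {..<k}" "j \<in> {..<k}"
    then have "i \<noteq> j \<longrightarrow> f_negligible \<Omega> f (C i \<inter> C j)"
      using assms unfolding is_partition_def by simp
    then show "AE x in fmeasure \<Omega> f. i \<noteq> j \<longrightarrow> x \<notin> C i \<inter> C j"
      by (cases "i = j") (auto dest: AE_not_in_f_negligible)
  qed
  moreover have "AE x in fmeasure \<Omega> f. x \<notin> \<Omega> - (\<Union>i<k. C i)"
    using assms unfolding is_partition_def by (intro AE_not_in_f_negligible) simp
  ultimately show ?thesis
    using AE_in_domain
  proof eventually_elim
    case (elim x)
    then obtain i where "i < k" "x \<in> C i"
      by blast
    with elim(1) show ?case
      by (intro ex1I[of _ i]) auto
  qed
qed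

lemma sum_mass_partition:
  assumes "is_partition \<Omega> f k C"
  shows "(\<Sum>i<k. mass \<Omega> f (C i)) = 1"
proof -
  have C: "\<And>i. i < k \<Longrightarrow> C i \<in> sets lebesgue"
    using assms unfolding is_partition_def by auto
  then have "(\<Sum>i<k. measure (fmeasure \<Omega> f) (C i)) = 1"
    using AE_unique_cell[OF assms] by (intro sum_prob_AE_partition) auto
  then show ?thesis
    using C by (simp add: measure_fmeasure)
qed

end

locale equilibrium_comparison = prob_density \<Omega> f
  for \<Omega> :: "'a::euclidean_space set" and f :: "'a \<Rightarrow> real" +
  fixes p :: real and k :: nat and xs :: "nat \<Rightarrow> 'a" and h :: "nat \<Rightarrow> real \<Rightarrow> real"
    and A B :: "nat \<Rightarrow> 'a set"
  assumes h_strict_mono: "\<And>i. i < k \<Longrightarrow> strict_mono_on {0..1} (h i)"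
    and equilibrium_A: "is_equilibrium \<Omega> f p k xs h A"
    and partition_B: "is_partition \<Omega> f k B"
    and cost_B_le_A: "AE x in fmeasure \<Omega> f. cost \<Omega> f p k xs h B x \<le> cost \<Omega> f p k xs h A x"
begin

abbreviation "a i \<equiv> mass \<Omega> f (A i)"
abbreviation "b i \<equiv> mass \<Omega> f (B i)"

lemma partition_A: "is_partition \<Omega> f k A"
  using equilibrium_A unfolding is_equilibrium_def by simp

lemma A_sets: "i < k \<Longrightarrow> A i \<in> sets lebesgue"
  and B_sets: "i < k \<Longrightarrow> B i \<in> sets lebesgue"
  using partition_A partition_B unfolding is_partition_def by auto

lemma masses_in_unit_interval: "i < k \<Longrightarrow> a i \<in> {0..1} \<and> b i \<in> {0..1}"
  using A_sets B_sets by (simp add: mass_nonneg f_nonneg mass_le_1)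

definition preferred_region :: "nat \<Rightarrow> 'a set" where
  "preferred_region j = {x. \<forall>i<k. i \<noteq> j \<longrightarrow>
     norm (x - xs j) powr p + h j (a j) < norm (x - xs i) powr p + h i (a i)}"

lemma AE_in_preferred_region: "AE x in fmeasure \<Omega> f. \<forall>j<k. x \<in> A j \<longrightarrow> x \<in> preferred_region j"
proof -
  have "AE x in fmeasure \<Omega> f. \<forall>j\<in>{..<k}. x \<in> A j \<longrightarrow> x \<in> preferred_region j"
  proof (intro eventually_ball_finite ballI finite_lessThan)
    fix j assume "j \<in> {..<k}"
    then have "f_negligible \<Omega> f ((A j - preferred_region j) \<union> (preferred_region j - A j))"
      using equilibrium_A unfolding is_equilibrium_def f_ae_eq_def preferred_region_def by auto
    then show "AE x in fmeasure \<Omega> f. x \<in> A j \<longrightarrow> x \<in> preferred_region j"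
      by (rule AE_not_in_f_negligible[THEN eventually_mono]) blast
  qed
  then show ?thesis
    by (rule eventually_mono) simp
qed

lemma AE_mass_comparison:
  "AE x in fmeasure \<Omega> f. \<forall>i<k. \<forall>j<k. x \<in> B i \<inter> A j \<longrightarrow> b i \<le> a i \<and> (i \<noteq> j \<longrightarrow> b i < a i)"
  using AE_unique_cell[OF partition_A] AE_unique_cell[OF partition_B]
    AE_in_preferred_region cost_B_le_A
proof eventually_elim
  case (elim x)
  show ?case
  proof (intro allI impI)
    fix i j assume ij: "i < k" "j < k" and x: "x \<in> B i \<inter> A j"
    have hm: "strict_mono_on {0..1} (h i)"
      using h_strict_mono ij(1) .
    have le: "norm (x - xs i) powr p + h i (b i) \<le> norm (x - xs j) powr p + h j (a j)"
      using elim(4) x ij cost_on_cell[OF elim(2)] cost_on_cell[OF elim(1)] by simp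
    show "b i \<le> a i \<and> (i \<noteq> j \<longrightarrow> b i < a i)"
    proof (cases "i = j")
      case True
      then show ?thesis
        using le strict_mono_on_less_eq[OF hm] masses_in_unit_interval[OF ij(1)] by auto
    next
      case False
      then have "norm (x - xs j) powr p + h j (a j) < norm (x - xs i) powr p + h i (a i)"
        using elim(3) x ij unfolding preferred_region_def by blast
      then have "h i (b i) < h i (a i)"
        using le by linarith
      then show ?thesis
        using strict_mono_on_less[OF hm] masses_in_unit_interval[OF ij(1)] by auto
    qed
  qed
qed

lemma mass_B_le_A:
  assumes i: "i < k"
  shows "b i \<le> a i"
proof (cases "B i \<in> null_sets (fmeasure \<Omega> f)")
  case True
  then have "ennreal (b i) = 0"
    using emeasure_fmeasure[OF B_sets[OF i]] by auto
  then show ?thesis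
    using masses_in_unit_interval[OF i] by simp
next
  case False
  have "\<exists>x\<in>B i. (\<exists>!j. j < k \<and> x \<in> A j) \<and>
      (\<forall>i<k. \<forall>j<k. x \<in> B i \<inter> A j \<longrightarrow> b i \<le> a i \<and> (i \<noteq> j \<longrightarrow> b i < a i))"
    using AE_unique_cell[OF partition_A] AE_mass_comparison B_sets[OF i] False
    by (intro AE_imp_ex_in_non_null AE_conjI) simp_all
  then show ?thesis
    using i by blast
qed

lemma mass_B_eq_A:
  assumes "i < k"
  shows "b i = a i"
proof (rule ccontr)
  assume "b i \<noteq> a i"
  then have "(\<Sum>i<k. b i) < (\<Sum>i<k. a i)"
    using assms mass_B_le_A by (intro sum_strict_mono_ex1) (auto simp: order_less_le)
  then show False
    using sum_mass_partition[OF partition_A] sum_mass_partition[OF partition_B] by simp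
qed

lemma AE_not_in_B_inter_A:
  "AE x in fmeasure \<Omega> f. \<forall>i\<in>{..<k}. \<forall>j\<in>{..<k}. i \<noteq> j \<longrightarrow> x \<notin> B i \<inter> A j"
  using AE_mass_comparison by eventually_elim (use mass_B_eq_A in auto)

lemma cells_agree: "i < k \<Longrightarrow> f_ae_eq \<Omega> f (A i) (B i)"
proof -
  assume i: "i < k"
  have "AE x in fmeasure \<Omega> f. x \<notin> (A i - B i) \<union> (B i - A i)"
    using AE_unique_cell[OF partition_A] AE_unique_cell[OF partition_B] AE_not_in_B_inter_A
  proof eventually_elim
    case (elim x)
    obtain j where j: "j < k" "x \<in> A j"
      using elim(1) by blast
    obtain l where l: "l < k" "x \<in> B l"
      using elim(2) by blast
    have "l = j"
      using elim(3) j l by blast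
    moreover have "x \<in> A i \<longleftrightarrow> i = j"
      using elim(1) i j by blast
    moreover have "x \<in> B i \<longleftrightarrow> i = l"
      using elim(2) i l by blast
    ultimately show ?case
      by simp
  qed
  then show ?thesis
    unfolding f_ae_eq_def f_negligible_def
    using AE_iff_null_sets A_sets[OF i] B_sets[OF i] by (metis sets.Diff sets.Un sets_fmeasure)
qed

end

theorem proposition4p9:
  fixes \<Omega> :: "'a::euclidean_space set" and f :: "'a \<Rightarrow> real" and p :: real
    and k :: nat and xs :: "nat \<Rightarrow> 'a" and h :: "nat \<Rightarrow> real \<Rightarrow> real"
    and A B :: "nat \<Rightarrow> 'a set"
  assumes "\<Omega> \<in> sets borel" and "bounded \<Omega>"
    and "\<forall>x\<in>\<Omega>. f x \<ge> 0"
    and "set_integrable lebesgue \<Omega> f"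
    and "set_lebesgue_integral lebesgue \<Omega> f = 1"
    and "p \<ge> 1"
    and "\<forall>i<k. xs i \<in> \<Omega>"
    and "\<forall>i<k. strict_mono_on {0..1} (h i) \<and> (\<forall>t\<in>{0..1}. h i t \<ge> 0)"
    and "is_equilibrium \<Omega> f p k xs h A"
    and "is_partition \<Omega> f k B"
    and "AE x in fmeasure \<Omega> f. cost \<Omega> f p k xs h B x \<le> cost \<Omega> f p k xs h A x"
  shows "\<forall>i<k. f_ae_eq \<Omega> f (A i) (B i)"
proof -
  interpret equilibrium_comparison \<Omega> f p k xs h A B
    using assms by unfold_locales auto
  show ?thesis
    using cells_agree by blast
qed

end
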